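(* Let $N\to\infty$, let $h=h(N)$ satisfy $h\to\infty$ and $h=o(N)$, and let $Q=Q(N)\to\infty$ with $Q\ll N$. Let $g:\mathbb{N}\to\mathbb{R}$ satisfy, for every $\varepsilon>0$, $g(q)\ll_{\varepsilon}N^{\varepsilon}$ for all $q\le Q$. Let $f:\mathbb{N}\cup\{0\}\to\mathbb{R}$ and $S_f(\alpha)=\Re\sum_{0\le n\le N}f(n)e(n\alpha)$. If $S_f(\alpha)\ge0$ for all $\alpha\in[0,1]$, then $$\sum_{q\le Q}\frac{g(q)}{q}\sum_{j\,(\mathrm{mod}\,q)}\widehat{W}\Big(\frac jq\Big)S_f\Big(-\frac jq\Big)\lll\sum_{q\le Q}\frac1q\sum_{j\,(\mathrm{mod}\,q)}\widehat{W}\Big(\frac jq\Big)S_f\Big(-\frac jq\Big).$$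
   Context: $e(x)=e^{2\pi i x}$. For integers $a\in[-2h,2h]$, $W(a)=\max(2h-3|a|,\,|a|-2h)$, and $W(a)=0$ otherwise. Its discrete Fourier transform is $\widehat{W}(\beta)=\sum_a W(a)e(a\beta)$ for $\beta\in\mathbb{R}$. The inner sums run over a complete residue system modulo $q$. The notation $A\lll B$ means: for every $\varepsilon>0$, $A\ll_{\varepsilon}N^{\varepsilon}B$. *)

theory Defs
  imports "HOL-Analysis.Analysis"
begin

definition ee :: "real \<Rightarrow> complex" where
  "ee x = exp (2 * of_real pi * \<i> * of_real x)"

definition W :: "real \<Rightarrow> int \<Rightarrow> real" where
  "W h a = (if - 2 * h \<le> real_of_int a \<and> real_of_int a \<le> 2 * h
            then max (2 * h - 3 * \<bar>real_of_int a\<bar>) (\<bar>real_of_int a\<bar> - 2 * h) else 0)"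

text \<open>Discrete Fourier transform of W; W vanishes outside [-2h,2h].\<close>
definition W_hat :: "real \<Rightarrow> real \<Rightarrow> complex" where
  "W_hat h \<beta> = (\<Sum>a\<in>{-\<lfloor>2*h\<rfloor>..\<lfloor>2*h\<rfloor>}. of_real (W h a) * ee (real_of_int a * \<beta>))"

definition S :: "(nat \<Rightarrow> real) \<Rightarrow> nat \<Rightarrow> real \<Rightarrow> real" where
  "S f N \<alpha> = Re (\<Sum>n\<le>N. of_real (f n) * ee (real n * \<alpha>))"

definition Msum :: "(nat \<Rightarrow> real) \<Rightarrow> real \<Rightarrow> real \<Rightarrow> (nat \<Rightarrow> real) \<Rightarrow> nat \<Rightarrow> complex" where
  "Msum c h Q f N = (\<Sum>q\<in>{q::nat. 1 \<le> q \<and> real q \<le> Q}.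
      of_real (c q / real q) *
      (\<Sum>j<q. W_hat h (real j / real q) * of_real (S f N (- real j / real q))))"

end

theory Submission
  imports Defs
begin

text \<open>
  On integers, \<open>W h a = 4 max(h - |a|, 0) - max(2h - |a|, 0)\<close>, so \<open>W_hat h \<beta>\<close> is the
  real number \<open>4 F\<^sub>h(2\<pi>\<beta>) - F\<^sub>2\<^sub>h(2\<pi>\<beta>)\<close>, where \<open>F\<^sub>c\<close> is the Fourier transform of the
  tent \<open>a \<mapsto> max(c - |a|, 0)\<close>. Telescoping gives
  \<open>(1 - cos x) F\<^sub>c(x) = 2((1 - t) sin\<^sup>2(mx/2) + t sin\<^sup>2((m+1)x/2))\<close> with \<open>m = \<lfloor>c\<rfloor>\<close>,
  \<open>t = frac c\<close>, and the bounds \<open>|sin 2y| \<le> 2|sin y|\<close>, \<open>|sin(y + z)| \<le> |sin y| + |sin z|\<close>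
  then yield \<open>4 F\<^sub>h \<ge> F\<^sub>2\<^sub>h\<close>. Hence \<open>W_hat \<ge> 0\<close>, and since \<open>S\<^sub>f\<close> is 1-periodic and nonnegative,
  every inner sum over residues is nonnegative; the bound on \<open>g\<close> can then be applied
  termwise.
\<close>

text \<open>\<open>tent_hat c x = \<Sum>\<^bsub>|a| \<le> c\<^esub> (c - |a|) e(a x / (2\<pi>))\<close>, written as a cosine sum.\<close>
definition tent_hat :: "real \<Rightarrow> real \<Rightarrow> real" where
  "tent_hat c x = c + 2 * (\<Sum>k=1..nat \<lfloor>c\<rfloor>. (c - real k) * cos (real k * x))"

lemma one_minus_cos_mult_cos_sum:
  "(1 - cos x) * (c + 2 * (\<Sum>k=1..m. (c - real k) * cos (real k * x)))
     = 1 - (real m + 1 - c) * cos (real m * x) - (c - real m) * cos (real (Suc m) * x)"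
proof (induction m)
  case 0
  then show ?case by (simp add: algebra_simps)
next
  case (Suc m)
  have cos_rec: "cos (real (Suc (Suc m)) * x) = 2 * cos (real (Suc m) * x) * cos x - cos (real m * x)"
    using cos_add[of "real (Suc m) * x" x] cos_diff[of "real (Suc m) * x" x]
    by (simp add: algebra_simps)
  have "(1 - cos x) * (c + 2 * (\<Sum>k=1..Suc m. (c - real k) * cos (real k * x)))
     = (1 - cos x) * (c + 2 * (\<Sum>k=1..m. (c - real k) * cos (real k * x)))
       + 2 * (c - real (Suc m)) * cos (real (Suc m) * x) * (1 - cos x)"
    by (simp add: algebra_simps)
  also have "\<dots> = 1 - (real m + 1 - c) * cos (real m * x) - (c - real m) * cos (real (Suc m) * x)
       + 2 * (c - real (Suc m)) * cos (real (Suc m) * x) * (1 - cos x)"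
    unfolding Suc ..
  also have "\<dots> = 1 - (real (Suc m) + 1 - c) * cos (real (Suc m) * x)
       - (c - real (Suc m)) * cos (real (Suc (Suc m)) * x)"
    unfolding cos_rec by (simp add: algebra_simps)
  finally show ?case .
qed

lemma cos_eq_one_minus_sin_sq: "cos (y::real) = 1 - 2 * (sin (y / 2))\<^sup>2"
  using cos_double_sin[of "y / 2"] by simp

lemma one_minus_cos_mult_cos_sum_sin_sq:
  "(1 - cos x) * (c + 2 * (\<Sum>k=1..m. (c - real k) * cos (real k * x)))
     = 2 * ((real m + 1 - c) * (sin (real m * x / 2))\<^sup>2
            + (c - real m) * (sin (real (Suc m) * x / 2))\<^sup>2)"
  unfolding one_minus_cos_mult_cos_sum
  unfolding cos_eq_one_minus_sin_sq[of "real m * x"] cos_eq_one_minus_sin_sq[of "real (Suc m) * x"]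
  by (simp add: algebra_simps)

lemma sin_sq_double_le: "(sin (real (2*m) * x / 2))\<^sup>2 \<le> 4 * (sin (real m * x / 2))\<^sup>2"
proof -
  have "sin (real (2*m) * x / 2) = 2 * sin (real m * x / 2) * cos (real m * x / 2)"
    using sin_double[of "real m * x / 2"] by simp
  then have "(sin (real (2*m) * x / 2))\<^sup>2 = 4 * (sin (real m * x / 2))\<^sup>2 * (cos (real m * x / 2))\<^sup>2"
    by (simp add: power_mult_distrib)
  also have "\<dots> \<le> 4 * (sin (real m * x / 2))\<^sup>2 * 1"
    by (intro mult_left_mono) (auto simp: abs_cos_le_one abs_square_le_1)
  finally show ?thesis by simp
qed

lemma sin_sq_odd_le:
  "(sin (real (2*m+1) * x / 2))\<^sup>2
     \<le> (\<bar>sin (real m * x / 2)\<bar> + \<bar>sin (real (Suc m) * x / 2)\<bar>)\<^sup>2"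
proof -
  have "sin (real (2*m+1) * x / 2) = sin (real m * x / 2 + real (Suc m) * x / 2)"
    by (simp add: field_simps)
  then have "\<bar>sin (real (2*m+1) * x / 2)\<bar>
      \<le> \<bar>sin (real m * x / 2)\<bar> * \<bar>cos (real (Suc m) * x / 2)\<bar>
        + \<bar>cos (real m * x / 2)\<bar> * \<bar>sin (real (Suc m) * x / 2)\<bar>"
    by (simp add: sin_add abs_mult[symmetric] abs_triangle_ineq)
  also have "\<dots> \<le> \<bar>sin (real m * x / 2)\<bar> + \<bar>sin (real (Suc m) * x / 2)\<bar>"
    by (intro add_mono mult_left_le mult_left_le_one_le) (auto simp: abs_cos_le_one)
  finally show ?thesis
    by (simp add: abs_le_square_iff[symmetric])
qed

lemma floor_double: "\<lfloor>2 * c\<rfloor> = (if frac c < 1/2 then 2 * \<lfloor>c\<rfloor> else 2 * \<lfloor>c\<rfloor> + 1)"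
  using frac_ge_0[of c] frac_lt_1[of c] unfolding frac_def by (intro floor_unique) auto

lemma one_minus_cos_mult_tent_hat:
  assumes "0 \<le> c"
  shows "(1 - cos x) * tent_hat c x
     = 2 * ((1 - frac c) * (sin (real (nat \<lfloor>c\<rfloor>) * x / 2))\<^sup>2
            + frac c * (sin (real (Suc (nat \<lfloor>c\<rfloor>)) * x / 2))\<^sup>2)"
  using assms unfolding tent_hat_def one_minus_cos_mult_cos_sum_sin_sq frac_def by simp

lemma one_minus_cos_mult_tent_doubling_nonneg:
  assumes "0 \<le> h"
  shows "0 \<le> (1 - cos x) * (4 * tent_hat h x - tent_hat (2 * h) x)"
proof -
  define m where "m = nat \<lfloor>h\<rfloor>"
  define t where "t = frac h"
  define a where "a = \<bar>sin (real m * x / 2)\<bar>"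
  define b where "b = \<bar>sin (real (Suc m) * x / 2)\<bar>"
  have t: "0 \<le> t" "t < 1" "frac (2 * h) = (if t < 1/2 then 2 * t else 2 * t - 1)"
    using frac_ge_0[of h] frac_lt_1[of h] floor_double[of h] unfolding t_def frac_def by auto
  have floor_2h: "nat \<lfloor>2 * h\<rfloor> = (if t < 1/2 then 2 * m else 2 * m + 1)"
    using floor_double[of h] assms unfolding m_def t_def by (simp add: nat_mult_distrib nat_add_distrib)
  have tent_h: "(1 - cos x) * tent_hat h x = 2 * ((1 - t) * a\<^sup>2 + t * b\<^sup>2)"
    unfolding one_minus_cos_mult_tent_hat[OF assms] a_def b_def m_def t_def by simp
  have "(1 - cos x) * (4 * tent_hat h x - tent_hat (2 * h) x)
      = 4 * ((1 - cos x) * tent_hat h x) - (1 - cos x) * tent_hat (2 * h) x"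
    by (simp add: algebra_simps)
  moreover have "4 * (2 * ((1 - t) * a\<^sup>2 + t * b\<^sup>2)) - (1 - cos x) * tent_hat (2 * h) x \<ge> 0"
  proof (cases "t < 1/2")
    case True
    define A where "A = (sin (real (2 * m) * x / 2))\<^sup>2"
    define B where "B = (sin (real (Suc (2 * m)) * x / 2))\<^sup>2"
    have tent_2h: "(1 - cos x) * tent_hat (2 * h) x = 2 * ((1 - 2 * t) * A + 2 * t * B)"
      using one_minus_cos_mult_tent_hat[of "2 * h" x] assms True t(3)
      unfolding floor_2h A_def B_def m_def t_def by simp
    have "A \<le> 4 * a\<^sup>2" "B \<le> (a + b)\<^sup>2"
      unfolding A_def B_def a_def b_def using sin_sq_double_le sin_sq_odd_le by auto
    then have "0 \<le> (1 - 2 * t) * (4 * a\<^sup>2 - A)" "0 \<le> t * ((a + b)\<^sup>2 - B)" "0 \<le> t * (a - b)\<^sup>2"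
      using True t by simp_all
    then show ?thesis
      unfolding tent_2h by (simp add: algebra_simps power2_eq_square)
  next
    case False
    define A where "A = (sin (real (2 * m + 1) * x / 2))\<^sup>2"
    define B where "B = (sin (real (2 * Suc m) * x / 2))\<^sup>2"
    have tent_2h: "(1 - cos x) * tent_hat (2 * h) x = 2 * ((2 - 2 * t) * A + (2 * t - 1) * B)"
      using one_minus_cos_mult_tent_hat[of "2 * h" x] assms False t(3)
      unfolding floor_2h A_def B_def m_def t_def by simp
    have "A \<le> (a + b)\<^sup>2" "B \<le> 4 * b\<^sup>2"
      unfolding A_def B_def a_def b_def using sin_sq_double_le[of "Suc m"] sin_sq_odd_le by auto
    then have "0 \<le> (2 * t - 1) * (4 * b\<^sup>2 - B)" "0 \<le> (1 - t) * ((a + b)\<^sup>2 - A)"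
        "0 \<le> (1 - t) * (a - b)\<^sup>2"
      using False t by simp_all
    then show ?thesis
      unfolding tent_2h by (simp add: algebra_simps power2_eq_square)
  qed
  ultimately show ?thesis unfolding tent_h by simp
qed

lemma cos_of_nat_mult_eq_one:
  assumes "cos x = 1"
  shows "cos (real k * x) = 1"
proof -
  obtain n :: int where "x = of_int n * 2 * pi"
    using assms cos_one_2pi_int by blast
  then have "real k * x = of_int (int k * n) * 2 * pi"
    by simp
  then show ?thesis
    using cos_one_2pi_int by blast
qed

lemma tent_hat_cos_eq_one:
  assumes "cos x = 1"
  shows "tent_hat c x = (2 * real (nat \<lfloor>c\<rfloor>) + 1) * c - real (nat \<lfloor>c\<rfloor>) * (real (nat \<lfloor>c\<rfloor>) + 1)"
proof -
  have "(\<Sum>k=1..nat \<lfloor>c\<rfloor>. (c - real k) * cos (real k * x))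
      = real (nat \<lfloor>c\<rfloor>) * c - (\<Sum>k=1..nat \<lfloor>c\<rfloor>. real k)"
    by (simp add: cos_of_nat_mult_eq_one[OF assms] sum_subtractf)
  then show ?thesis
    unfolding tent_hat_def using double_gauss_sum_from_Suc_0[of "nat \<lfloor>c\<rfloor>", where 'a=real]
    by (simp add: algebra_simps)
qed

lemma tent_doubling_nonneg:
  assumes "0 \<le> h"
  shows "0 \<le> 4 * tent_hat h x - tent_hat (2 * h) x"
proof (cases "cos x = 1")
  case True
  define m where "m = nat \<lfloor>h\<rfloor>"
  define t where "t = frac h"
  have "0 \<le> t" "t < 1"
    unfolding t_def by (simp_all add: frac_lt_1)
  moreover have "nat \<lfloor>2 * h\<rfloor> = (if t < 1/2 then 2 * m else 2 * m + 1)"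
    using floor_double[of h] assms unfolding m_def t_def by (simp add: nat_mult_distrib nat_add_distrib)
  moreover have "h = real m + t"
    using assms unfolding m_def t_def frac_def by simp
  ultimately show ?thesis
    unfolding tent_hat_cos_eq_one[OF True] m_def[symmetric]
    by (auto simp: algebra_simps)
next
  case False
  then have "0 < 1 - cos x"
    using cos_le_one[of x] by linarith
  then show ?thesis
    using one_minus_cos_mult_tent_doubling_nonneg[OF assms, of x] by (simp add: zero_le_mult_iff)
qed

lemma ee_eq_cis: "ee y = cis (2 * pi * y)"
  unfolding ee_def cis_conv_exp by (simp add: algebra_simps)

lemma ee_add_of_int: "ee (y + of_int k) = ee y"
proof -
  have "2 * of_real pi * \<i> * of_real (y + of_int k)
      = 2 * of_real pi * \<i> * of_real y + \<i> * (of_int k * (of_real pi * 2))"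
    by (simp add: algebra_simps)
  then show ?thesis
    unfolding ee_def by simp
qed

lemma ee_uminus_add_ee: "ee (- y) + ee y = of_real (2 * cos (2 * pi * y))"
  unfolding ee_eq_cis by (simp add: complex_eq_iff)

lemma sum_symmetric_interval_ee:
  fixes u :: "int \<Rightarrow> real"
  assumes even: "\<And>a. u (- a) = u a"
  shows "(\<Sum>a\<in>{- int M..int M}. of_real (u a) * ee (of_int a * \<beta>))
       = of_real (u 0 + 2 * (\<Sum>k=1..M. u (int k) * cos (real k * (2 * pi * \<beta>))))"
proof (induction M)
  case 0
  then show ?case by (simp add: ee_def)
next
  case (Suc M)
  have "{- int (Suc M)..int (Suc M)} = insert (- int (Suc M)) (insert (int (Suc M)) {- int M..int M})"
    by auto
  then have "(\<Sum>a\<in>{- int (Suc M)..int (Suc M)}. of_real (u a) * ee (of_int a * \<beta>))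
      = of_real (u (int (Suc M))) * (ee (- (real (Suc M) * \<beta>)) + ee (real (Suc M) * \<beta>))
        + (\<Sum>a\<in>{- int M..int M}. of_real (u a) * ee (of_int a * \<beta>))"
    using even[of "int (Suc M)"] by (simp add: algebra_simps)
  then show ?case
    unfolding ee_uminus_add_ee Suc by (simp add: algebra_simps)
qed

lemma W_eq_tents:
  assumes "0 \<le> h"
  shows "W h a = 4 * max (h - \<bar>real_of_int a\<bar>) 0 - max (2 * h - \<bar>real_of_int a\<bar>) 0"
  using assms unfolding W_def by (auto simp: max_def)

lemma tent_hat_eq_sum:
  assumes "0 \<le> c" "nat \<lfloor>c\<rfloor> \<le> M"
  shows "tent_hat c x = c + 2 * (\<Sum>k=1..M. max (c - real k) 0 * cos (real k * x))"
proof -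
  have "(\<Sum>k=1..M. max (c - real k) 0 * cos (real k * x))
      = (\<Sum>k=1..nat \<lfloor>c\<rfloor>. max (c - real k) 0 * cos (real k * x))"
  proof (rule sum.mono_neutral_right)
    show "\<forall>k\<in>{1..M} - {1..nat \<lfloor>c\<rfloor>}. max (c - real k) 0 * cos (real k * x) = 0"
      using assms(1) by (auto simp: not_le le_nat_floor) linarith
  qed (use assms in auto)
  also have "\<dots> = (\<Sum>k=1..nat \<lfloor>c\<rfloor>. (c - real k) * cos (real k * x))"
    using assms(1) by (intro sum.cong) (auto simp: max_def le_nat_floor, linarith)
  finally show ?thesis
    unfolding tent_hat_def by simp
qed

lemma W_hat_eq_tent_hat:
  assumes "0 \<le> h"
  shows "W_hat h \<beta> = of_real (4 * tent_hat h (2 * pi * \<beta>) - tent_hat (2 * h) (2 * pi * \<beta>))"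
proof -
  define M where "M = nat \<lfloor>2 * h\<rfloor>"
  define x where "x = 2 * pi * \<beta>"
  have "{- \<lfloor>2 * h\<rfloor>..\<lfloor>2 * h\<rfloor>} = {- int M..int M}"
    using assms unfolding M_def by simp
  then have "W_hat h \<beta> = of_real (W h 0 + 2 * (\<Sum>k=1..M. W h (int k) * cos (real k * x)))"
    unfolding W_hat_def x_def by (simp add: sum_symmetric_interval_ee W_def)
  also have "(\<Sum>k=1..M. W h (int k) * cos (real k * x))
      = 4 * (\<Sum>k=1..M. max (h - real k) 0 * cos (real k * x))
        - (\<Sum>k=1..M. max (2 * h - real k) 0 * cos (real k * x))"
    unfolding W_eq_tents[OF assms]
    by (simp add: sum_distrib_left sum_subtractf[symmetric] algebra_simps)
  also have "W h 0 + 2 * \<dots> = 4 * tent_hat h x - tent_hat (2 * h) x"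
  proof -
    have "nat \<lfloor>h\<rfloor> \<le> M"
      using assms unfolding M_def by (intro nat_mono floor_mono) simp
    then show ?thesis
      using assms tent_hat_eq_sum[of h M x] tent_hat_eq_sum[of "2 * h" M x]
      unfolding M_def W_eq_tents[OF assms] by (simp add: algebra_simps)
  qed
  finally show ?thesis
    unfolding x_def .
qed

lemma W_hat_real_nonneg:
  assumes "0 \<le> h"
  shows "W_hat h \<beta> \<in> \<real>" "0 \<le> Re (W_hat h \<beta>)"
  using tent_doubling_nonneg[OF assms] unfolding W_hat_eq_tent_hat[OF assms] by auto

lemma S_uminus_eq: "S F N (- y) = S F N (1 - y)"
proof -
  have "ee (real n * (1 - y)) = ee (real n * (- y))" for n
    using ee_add_of_int[of "real n * (- y)" "int n"] by (simp add: algebra_simps)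
  then show ?thesis
    unfolding S_def by simp
qed

lemma norm_Msum_le:
  assumes h_nonneg: "0 \<le> h"
    and S_nonneg: "\<And>\<alpha>. 0 \<le> \<alpha> \<Longrightarrow> \<alpha> \<le> 1 \<Longrightarrow> 0 \<le> S F N \<alpha>"
    and c_bound: "\<And>q. 1 \<le> q \<Longrightarrow> real q \<le> Q \<Longrightarrow> \<bar>c q\<bar> \<le> B"
  shows "norm (Msum c h Q F N) \<le> B * Re (Msum (\<lambda>_. 1) h Q F N)"
proof -
  define I where "I = {q::nat. 1 \<le> q \<and> real q \<le> Q}"
  define r where "r q = (\<Sum>j<q. Re (W_hat h (real j / real q)) * S F N (- real j / real q))" for q
  have r_nonneg: "0 \<le> r q" for q
    unfolding r_def
  proof (intro sum_nonneg mult_nonneg_nonneg)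
    fix j assume "j \<in> {..<q}"
    then have "0 \<le> 1 - real j / real q"
      by (simp add: divide_le_eq)
    then show "0 \<le> S F N (- real j / real q)"
      using S_nonneg S_uminus_eq[of F N "real j / real q"] by simp
  qed (rule W_hat_real_nonneg[OF h_nonneg])
  have Msum_eq: "Msum c' h Q F N = of_real (\<Sum>q\<in>I. c' q / real q * r q)" for c'
    unfolding Msum_def I_def[symmetric] r_def
    using W_hat_real_nonneg(1)[OF h_nonneg] by (simp add: of_real_Re)
  have "norm (Msum c h Q F N) \<le> (\<Sum>q\<in>I. \<bar>c q / real q * r q\<bar>)"
    unfolding Msum_eq norm_of_real by (rule sum_abs)
  also have "\<dots> \<le> (\<Sum>q\<in>I. B * (1 / real q * r q))"
  proof (rule sum_mono)
    fix q assume "q \<in> I"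
    then have "\<bar>c q\<bar> * (r q / real q) \<le> B * (r q / real q)"
      using c_bound r_nonneg[of q] unfolding I_def by (intro mult_right_mono) auto
    then show "\<bar>c q / real q * r q\<bar> \<le> B * (1 / real q * r q)"
      using r_nonneg[of q] by (simp add: abs_mult)
  qed
  also have "\<dots> = B * Re (Msum (\<lambda>_. 1) h Q F N)"
    unfolding Msum_eq by (simp add: sum_distrib_left)
  finally show ?thesis .
qed

theorem lemma2:
  fixes h Q :: "nat \<Rightarrow> real"
    and g :: "nat \<Rightarrow> nat \<Rightarrow> real"
    and f :: "nat \<Rightarrow> nat \<Rightarrow> real"
  assumes h_inf: "filterlim h at_top sequentially"
    and h_small: "(\<lambda>N. h N / real N) \<longlonglongrightarrow> 0"
    and Q_inf: "filterlim Q at_top sequentially"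
    and Q_le: "\<exists>C. \<forall>\<^sub>F N in sequentially. Q N \<le> C * real N"
    and g_bound: "\<And>\<epsilon>. \<epsilon> > 0 \<Longrightarrow> \<exists>C. \<forall>\<^sub>F N in sequentially.
                    \<forall>q. 1 \<le> q \<and> real q \<le> Q N \<longrightarrow> \<bar>g N q\<bar> \<le> C * real N powr \<epsilon>"
    and S_nonneg: "\<And>N \<alpha>. 0 \<le> \<alpha> \<Longrightarrow> \<alpha> \<le> 1 \<Longrightarrow> S (f N) N \<alpha> \<ge> 0"
  shows "\<forall>\<epsilon>>0. \<exists>C. \<forall>\<^sub>F N in sequentially.
           norm (Msum (g N) (h N) (Q N) (f N) N)
             \<le> C * real N powr \<epsilon> * Re (Msum (\<lambda>_. 1) (h N) (Q N) (f N) N)"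
proof (intro allI impI)
  fix \<epsilon> :: real
  assume "\<epsilon> > 0"
  then obtain C where C: "\<forall>\<^sub>F N in sequentially.
      \<forall>q. 1 \<le> q \<and> real q \<le> Q N \<longrightarrow> \<bar>g N q\<bar> \<le> C * real N powr \<epsilon>"
    using g_bound by blast
  moreover have "\<forall>\<^sub>F N in sequentially. 0 \<le> h N"
    using h_inf by (simp add: filterlim_at_top)
  ultimately have "\<forall>\<^sub>F N in sequentially.
      norm (Msum (g N) (h N) (Q N) (f N) N)
        \<le> C * real N powr \<epsilon> * Re (Msum (\<lambda>_. 1) (h N) (Q N) (f N) N)"
    by eventually_elim (intro norm_Msum_le; use S_nonneg in auto)
  then show "\<exists>C. \<forall>\<^sub>F N in sequentially.
      norm (Msum (g N) (h N) (Q N) (f N) N)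
        \<le> C * real N powr \<epsilon> * Re (Msum (\<lambda>_. 1) (h N) (Q N) (f N) N)" ..
qed

end
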